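(* Let $a\in\mathbb{D}\setminus\{0\}$ and $\alpha,\beta\in\mathbb{C}$ with $\beta\neq0$. If $\alpha+\beta K_a$ is $\mathcal{H}^2_{\omega}$-inner, then $\alpha=-\beta K_a(a)$ and $$\alpha+\beta K_a=\mu\,\frac{K_a(a)-K_a}{\sqrt{K_a(a)\,(K_a(a)-1)}}$$ for some $\mu\in\mathbb{C}$ with $|\mu|=1$; conversely every such function is $\mathcal{H}^2_{\omega}$-inner.
   Context: Let $\omega=\{\omega_n\}_{n\geq 0}$ be a sequence of positive reals with $\omega_0=1$ and $\lim_{n\to\infty}\omega_{n+1}/\omega_n=1$. $\mathcal{H}^2_{\omega}$ is the Hilbert space of power series $f(z)=\sum_{n\ge0}a_nz^n$ with $\|f\|^2=\sum_{n\geq0}\omega_n|a_n|^2<\infty$ and inner product $\langle f,g\rangle=\sum_n\omega_na_n\overline{b_n}$; its reproducing kernel on $\mathbb{D}$ is $K_\lambda(z)=\sum_{n\ge0}\overline{\lambda}^nz^n/\omega_n$. A function $f$ is $\mathcal{H}^2_{\omega}$-inner if $\|f\|=1$ and $\langle z^mf,f\rangle=0$ for all integers $m\geq1$. *)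

theory Defs
  imports "HOL-Analysis.Analysis"
begin

text \<open>Elements of H^2_omega are represented by their Taylor coefficient sequences
  f :: nat => complex, i.e. f n is the coefficient of z^n.\<close>

definition weight_ok :: "(nat \<Rightarrow> real) \<Rightarrow> bool" where
  "weight_ok \<omega> \<longleftrightarrow> (\<forall>n. \<omega> n > 0) \<and> \<omega> 0 = 1 \<and> (\<lambda>n. \<omega> (Suc n) / \<omega> n) \<longlonglongrightarrow> 1"

definition in_H2w :: "(nat \<Rightarrow> real) \<Rightarrow> (nat \<Rightarrow> complex) \<Rightarrow> bool" where
  "in_H2w \<omega> f \<longleftrightarrow> summable (\<lambda>n. \<omega> n * (cmod (f n))\<^sup>2)"

definition H2w_norm :: "(nat \<Rightarrow> real) \<Rightarrow> (nat \<Rightarrow> complex) \<Rightarrow> real" where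
  "H2w_norm \<omega> f = sqrt (\<Sum>n. \<omega> n * (cmod (f n))\<^sup>2)"

definition H2w_inner :: "(nat \<Rightarrow> real) \<Rightarrow> (nat \<Rightarrow> complex) \<Rightarrow> (nat \<Rightarrow> complex) \<Rightarrow> complex" where
  "H2w_inner \<omega> f g = (\<Sum>n. complex_of_real (\<omega> n) * f n * cnj (g n))"

definition zpow_mult :: "nat \<Rightarrow> (nat \<Rightarrow> complex) \<Rightarrow> (nat \<Rightarrow> complex)" where
  "zpow_mult m f = (\<lambda>n. if n < m then 0 else f (n - m))"

definition H2w_is_inner :: "(nat \<Rightarrow> real) \<Rightarrow> (nat \<Rightarrow> complex) \<Rightarrow> bool" where
  "H2w_is_inner \<omega> f \<longleftrightarrow> in_H2w \<omega> f \<and> H2w_norm \<omega> f = 1 \<and>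
     (\<forall>m::nat. m \<ge> 1 \<longrightarrow> H2w_inner \<omega> (zpow_mult m f) f = 0)"

definition kernel :: "(nat \<Rightarrow> real) \<Rightarrow> complex \<Rightarrow> (nat \<Rightarrow> complex)" where
  "kernel \<omega> lam = (\<lambda>n. cnj lam ^ n / complex_of_real (\<omega> n))"

definition ps_eval :: "(nat \<Rightarrow> complex) \<Rightarrow> complex \<Rightarrow> complex" where
  "ps_eval f z = (\<Sum>n. f n * z ^ n)"

definition const_ps :: "complex \<Rightarrow> (nat \<Rightarrow> complex)" where
  "const_ps c = (\<lambda>n. if n = 0 then c else 0)"

end

theory Submission
  imports Defs
begin

text \<open>By the reproducing property, <g, \<alpha> + \<beta> K_a> = g(0) conj \<alpha> + conj \<beta> g(a) for every g.
  With f = \<alpha> + \<beta> K_a and g = z^m f this gives <z^m f, f> = conj \<beta> a^m f(a), so for a, \<beta> \<noteq> 0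
  innerness forces f(a) = \<alpha> + \<beta> K_a(a) = 0; with g = f it then gives
  ||f||^2 = |\<beta>|^2 K_a(a) (K_a(a) - 1), which determines |\<beta>|. Since K_a(a) = \<Sum> |a|^(2n) / \<omega>_n > 1,
  the square root is real and positive.\<close>

definition kernel_diag :: "(nat \<Rightarrow> real) \<Rightarrow> complex \<Rightarrow> real" where
  "kernel_diag \<omega> a = (\<Sum>n. ((cmod a)\<^sup>2)^n / \<omega> n)"

lemma summable_power_div_weight:
  assumes w: "weight_ok \<omega>" and r: "0 \<le> r" "r < 1"
  shows "summable (\<lambda>n. r^n / \<omega> n)"
proof -
  have pos: "\<And>n. \<omega> n > 0" and lim: "(\<lambda>n. \<omega> (Suc n) / \<omega> n) \<longlonglongrightarrow> 1"
    using w by (auto simp: weight_ok_def)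
  have "(\<lambda>n. r * inverse (\<omega> (Suc n) / \<omega> n)) \<longlonglongrightarrow> r * inverse 1"
    by (intro tendsto_intros lim) simp
  hence ratio: "(\<lambda>n. r * (\<omega> n / \<omega> (Suc n))) \<longlonglongrightarrow> r" by simp
  define c where "c = (1 + r) / 2"
  have "r < c" "c < 1" using r by (auto simp: c_def)
  then obtain N where N: "\<And>n. n \<ge> N \<Longrightarrow> r * (\<omega> n / \<omega> (Suc n)) < c"
    using order_tendstoD(2)[OF ratio] by (auto simp: eventually_sequentially)
  show ?thesis
  proof (rule summable_ratio_test[of c N])
    fix n assume "n \<ge> N"
    have "r ^ Suc n / \<omega> (Suc n) = (r * (\<omega> n / \<omega> (Suc n))) * (r^n / \<omega> n)"
      using pos[of n] pos[of "Suc n"] by (simp add: field_simps)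
    also have "\<dots> \<le> c * (r^n / \<omega> n)"
      using N[OF \<open>n \<ge> N\<close>] pos[of n] r by (intro mult_right_mono) auto
    finally show "norm (r ^ Suc n / \<omega> (Suc n)) \<le> c * norm (r^n / \<omega> n)"
      using pos[of n] pos[of "Suc n"] r by simp
  qed (use \<open>c < 1\<close> in simp)
qed

lemma kernel_times_power: "kernel \<omega> a n * a ^ n = of_real (((cmod a)\<^sup>2)^n / \<omega> n)"
proof -
  have "cnj a * a = of_real ((cmod a)\<^sup>2)"
    by (metis complex_norm_square mult.commute)
  hence "cnj a ^ n * a ^ n = of_real (((cmod a)\<^sup>2)^n)"
    by (simp add: power_mult_distrib[symmetric] of_real_power)
  thus ?thesis by (simp add: kernel_def)
qed

lemma kernel_power_sums:
  assumes "weight_ok \<omega>" and "cmod a < 1"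
  shows "(\<lambda>n. kernel \<omega> a n * a ^ n) sums of_real (kernel_diag \<omega> a)"
proof -
  have "summable (\<lambda>n. ((cmod a)\<^sup>2)^n / \<omega> n)"
    using assms by (intro summable_power_div_weight) (auto simp: abs_square_less_1)
  thus ?thesis
    unfolding kernel_times_power kernel_diag_def by (intro sums_of_real summable_sums)
qed

lemma ps_eval_kernel_self:
  assumes "weight_ok \<omega>" and "cmod a < 1"
  shows "ps_eval (kernel \<omega> a) a = of_real (kernel_diag \<omega> a)"
  unfolding ps_eval_def using sums_unique[OF kernel_power_sums[OF assms]] by simp

lemma kernel_diag_gt_1:
  assumes w: "weight_ok \<omega>" and "a \<noteq> 0" and "cmod a < 1"
  shows "kernel_diag \<omega> a > 1"
proof -
  have pos: "\<And>n. \<omega> n > 0" and "\<omega> 0 = 1" using w by (auto simp: weight_ok_def)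
  have "summable (\<lambda>n. ((cmod a)\<^sup>2)^n / \<omega> n)"
    using assms by (intro summable_power_div_weight) (auto simp: abs_square_less_1)
  hence "(\<Sum>n<2. ((cmod a)\<^sup>2)^n / \<omega> n) \<le> kernel_diag \<omega> a"
    unfolding kernel_diag_def using pos by (intro sum_le_suminf) (auto intro!: divide_nonneg_pos)
  moreover have "(\<Sum>n<2. ((cmod a)\<^sup>2)^n / \<omega> n) = 1 + (cmod a)\<^sup>2 / \<omega> 1"
    using \<open>\<omega> 0 = 1\<close> by (simp add: numeral_2_eq_2)
  moreover have "(cmod a)\<^sup>2 / \<omega> 1 > 0" using pos[of 1] \<open>a \<noteq> 0\<close> by simp
  ultimately show ?thesis by linarith
qed

lemma zpow_mult_power_sums:
  assumes "(\<lambda>n. f n * z ^ n) sums s"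
  shows "(\<lambda>n. zpow_mult m f n * z ^ n) sums (z ^ m * s)"
proof -
  have "(\<lambda>i. zpow_mult m f (i + m) * z ^ (i + m)) = (\<lambda>i. z ^ m * (f i * z ^ i))"
    by (simp add: zpow_mult_def power_add mult_ac)
  hence "(\<lambda>i. zpow_mult m f (i + m) * z ^ (i + m)) sums (z ^ m * s)"
    using sums_mult[OF assms] by simp
  hence "(\<lambda>n. zpow_mult m f n * z ^ n) sums (z ^ m * s + (\<Sum>i<m. zpow_mult m f i * z ^ i))"
    using sums_iff_shift[of "\<lambda>n. zpow_mult m f n * z ^ n" m] by simp
  thus ?thesis by (simp add: zpow_mult_def)
qed

lemma const_plus_kernel_power_sums:
  assumes "weight_ok \<omega>" and "cmod a < 1"
  shows "(\<lambda>n. (const_ps \<alpha> n + \<beta> * kernel \<omega> a n) * a ^ n) sums (\<alpha> + \<beta> * of_real (kernel_diag \<omega> a))"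
proof -
  have "(\<lambda>n. (if n = 0 then \<alpha> else 0) + \<beta> * (kernel \<omega> a n * a ^ n))
          sums (\<alpha> + \<beta> * of_real (kernel_diag \<omega> a))"
    using sums_single[of 0 "\<lambda>_. \<alpha>"] sums_mult[OF kernel_power_sums[OF assms], of \<beta>]
    by (intro sums_add) auto
  moreover have "(const_ps \<alpha> n + \<beta> * kernel \<omega> a n) * a ^ n
                   = (if n = 0 then \<alpha> else 0) + \<beta> * (kernel \<omega> a n * a ^ n)" for n
    by (simp add: const_ps_def algebra_simps)
  ultimately show ?thesis by simp
qed

lemma H2w_inner_terms_const_plus_kernel_sums:
  assumes w: "weight_ok \<omega>" and g: "(\<lambda>n. g n * a ^ n) sums s"
  shows "(\<lambda>n. of_real (\<omega> n) * g n * cnj (const_ps \<alpha> n + \<beta> * kernel \<omega> a n))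
           sums (g 0 * cnj \<alpha> + cnj \<beta> * s)"
proof -
  have pos: "\<And>n. \<omega> n > 0" and "\<omega> 0 = 1" using w by (auto simp: weight_ok_def)
  have "of_real (\<omega> n) * g n * cnj (const_ps \<alpha> n + \<beta> * kernel \<omega> a n)
        = (if n = 0 then g 0 * cnj \<alpha> else 0) + cnj \<beta> * (g n * a ^ n)" for n
    using pos[of n] \<open>\<omega> 0 = 1\<close>
    by (auto simp: const_ps_def kernel_def field_simps)
  moreover have "(\<lambda>n. (if n = 0 then g 0 * cnj \<alpha> else 0) + cnj \<beta> * (g n * a ^ n))
                   sums (g 0 * cnj \<alpha> + cnj \<beta> * s)"
    using sums_single[of 0 "\<lambda>_. g 0 * cnj \<alpha>"] sums_mult[OF g, of "cnj \<beta>"]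
    by (intro sums_add) auto
  ultimately show ?thesis by simp
qed

lemma H2w_inner_zpow_const_plus_kernel:
  fixes \<alpha> \<beta> :: complex
  assumes "weight_ok \<omega>" and "cmod a < 1" and "m \<ge> 1"
  defines "f \<equiv> \<lambda>n. const_ps \<alpha> n + \<beta> * kernel \<omega> a n"
  shows "H2w_inner \<omega> (zpow_mult m f) f = cnj \<beta> * a ^ m * (\<alpha> + \<beta> * of_real (kernel_diag \<omega> a))"
proof -
  have "(\<lambda>n. zpow_mult m f n * a ^ n) sums (a ^ m * (\<alpha> + \<beta> * of_real (kernel_diag \<omega> a)))"
    unfolding f_def by (intro zpow_mult_power_sums const_plus_kernel_power_sums assms)
  from H2w_inner_terms_const_plus_kernel_sums[OF assms(1) this, of \<alpha> \<beta>]
  show ?thesis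
    using \<open>m \<ge> 1\<close> unfolding H2w_inner_def f_def by (simp add: sums_iff zpow_mult_def mult_ac)
qed

lemma const_plus_kernel_sqnorm_sums:
  assumes "weight_ok \<omega>" and "cmod a < 1"
  shows "(\<lambda>n. \<omega> n * (cmod (const_ps \<alpha> n + \<beta> * kernel \<omega> a n))\<^sup>2)
           sums Re ((\<alpha> + \<beta>) * cnj \<alpha> + cnj \<beta> * (\<alpha> + \<beta> * of_real (kernel_diag \<omega> a)))"
proof -
  have "const_ps \<alpha> 0 + \<beta> * kernel \<omega> a 0 = \<alpha> + \<beta>"
    using assms(1) by (simp add: const_ps_def kernel_def weight_ok_def)
  with H2w_inner_terms_const_plus_kernel_sums
         [OF assms(1) const_plus_kernel_power_sums[OF assms, of \<alpha> \<beta>], of \<alpha> \<beta>]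
  have "(\<lambda>n. of_real (\<omega> n) * (const_ps \<alpha> n + \<beta> * kernel \<omega> a n) * cnj (const_ps \<alpha> n + \<beta> * kernel \<omega> a n))
          sums ((\<alpha> + \<beta>) * cnj \<alpha> + cnj \<beta> * (\<alpha> + \<beta> * of_real (kernel_diag \<omega> a)))"
    by simp
  from sums_Re[OF this] show ?thesis
    by (simp only: mult.assoc complex_norm_square[symmetric] of_real_mult[symmetric] Re_complex_of_real)
qed

lemma H2w_is_inner_const_plus_kernel_iff:
  assumes w: "weight_ok \<omega>" and "a \<noteq> 0" and a: "cmod a < 1" and "\<beta> \<noteq> 0"
  defines "k \<equiv> kernel_diag \<omega> a"
  shows "H2w_is_inner \<omega> (\<lambda>n. const_ps \<alpha> n + \<beta> * kernel \<omega> a n) \<longleftrightarrow>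
           \<alpha> = - \<beta> * of_real k \<and> (cmod \<beta>)\<^sup>2 * (k * (k - 1)) = 1"
proof -
  note sqnorm = const_plus_kernel_sqnorm_sums[OF w a, of \<alpha> \<beta>, folded k_def]
  have orth: "(\<forall>m::nat. m \<ge> 1 \<longrightarrow>
                H2w_inner \<omega> (zpow_mult m (\<lambda>n. const_ps \<alpha> n + \<beta> * kernel \<omega> a n))
                           (\<lambda>n. const_ps \<alpha> n + \<beta> * kernel \<omega> a n) = 0) \<longleftrightarrow> \<alpha> = - \<beta> * of_real k"
    using \<open>a \<noteq> 0\<close> \<open>\<beta> \<noteq> 0\<close>
    by (auto simp: H2w_inner_zpow_const_plus_kernel[OF w a] k_def add_eq_0_iff2)
  have "H2w_is_inner \<omega> (\<lambda>n. const_ps \<alpha> n + \<beta> * kernel \<omega> a n) \<longleftrightarrow>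
          Re ((\<alpha> + \<beta>) * cnj \<alpha> + cnj \<beta> * (\<alpha> + \<beta> * of_real k)) = 1 \<and> \<alpha> = - \<beta> * of_real k"
    unfolding H2w_is_inner_def in_H2w_def H2w_norm_def orth
    using sums_summable[OF sqnorm] sums_unique[OF sqnorm] by simp
  moreover have "(\<alpha> + \<beta>) * cnj \<alpha> + cnj \<beta> * (\<alpha> + \<beta> * of_real k)
                   = of_real ((cmod \<beta>)\<^sup>2 * (k * (k - 1)))" if "\<alpha> = - \<beta> * of_real k"
  proof -
    have "(\<alpha> + \<beta>) * cnj \<alpha> + cnj \<beta> * (\<alpha> + \<beta> * of_real k) = \<beta> * cnj \<beta> * of_real (k * (k - 1))"
      using that by (simp add: algebra_simps)
    thus ?thesis by (simp flip: complex_norm_square)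
  qed
  ultimately show ?thesis by (metis Re_complex_of_real)
qed

theorem mainTheorem12:
  fixes \<omega> :: "nat \<Rightarrow> real" and a \<alpha> \<beta> :: complex
  assumes "weight_ok \<omega>"
    and "a \<noteq> 0" and "cmod a < 1"
    and "\<beta> \<noteq> 0"
  shows "(H2w_is_inner \<omega> (\<lambda>n. const_ps \<alpha> n + \<beta> * kernel \<omega> a n) \<longrightarrow>
           \<alpha> = - \<beta> * ps_eval (kernel \<omega> a) a \<and>
           (\<exists>\<mu>::complex. cmod \<mu> = 1 \<and>
              (\<lambda>n. const_ps \<alpha> n + \<beta> * kernel \<omega> a n) =
              (\<lambda>n. \<mu> * (const_ps (ps_eval (kernel \<omega> a) a) n - kernel \<omega> a n) /
                    csqrt (ps_eval (kernel \<omega> a) a * (ps_eval (kernel \<omega> a) a - 1)))))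
       \<and> (\<forall>\<mu>::complex. cmod \<mu> = 1 \<longrightarrow>
           H2w_is_inner \<omega> (\<lambda>n. \<mu> * (const_ps (ps_eval (kernel \<omega> a) a) n - kernel \<omega> a n) /
                    csqrt (ps_eval (kernel \<omega> a) a * (ps_eval (kernel \<omega> a) a - 1))))"
proof -
  define k where "k = kernel_diag \<omega> a"
  define s where "s = sqrt (k * (k - 1))"
  have "k > 1" unfolding k_def using assms by (intro kernel_diag_gt_1)
  hence "s > 0" by (simp add: s_def)
  have eval: "ps_eval (kernel \<omega> a) a = of_real k"
    unfolding k_def using assms by (intro ps_eval_kernel_self)
  have root: "csqrt (of_real k * (of_real k - 1)) = of_real s"
    using \<open>k > 1\<close> by (simp add: s_def csqrt_of_real_nonneg flip: of_real_diff of_real_mult)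
  have inner_iff: "H2w_is_inner \<omega> (\<lambda>n. const_ps x n + y * kernel \<omega> a n) \<longleftrightarrow>
                     x = - y * of_real k \<and> cmod y * s = 1" if "y \<noteq> 0" for x y
    using H2w_is_inner_const_plus_kernel_iff[OF assms(1-3) that, of x]
          real_sqrt_eq_1_iff[of "(cmod y)\<^sup>2 * (k * (k - 1))"]
    by (simp add: k_def s_def real_sqrt_mult)
  have normal_form: "(\<lambda>n. \<mu> * (const_ps (of_real k) n - kernel \<omega> a n) / of_real s) =
                       (\<lambda>n. const_ps (\<mu> * of_real k / of_real s) n + (- \<mu> / of_real s) * kernel \<omega> a n)"
    for \<mu> using \<open>s > 0\<close> by (auto simp: const_ps_def field_simps)
  show ?thesis unfolding eval root normal_form
  proof (intro conjI impI allI exI)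
    assume "H2w_is_inner \<omega> (\<lambda>n. const_ps \<alpha> n + \<beta> * kernel \<omega> a n)"
    hence \<alpha>: "\<alpha> = - \<beta> * of_real k" and "cmod \<beta> * s = 1"
      using inner_iff[OF \<open>\<beta> \<noteq> 0\<close>] by auto
    thus "\<alpha> = - \<beta> * of_real k" and "cmod (- \<beta> * of_real s) = 1"
      using \<open>s > 0\<close> by (simp_all add: norm_mult)
    show "(\<lambda>n. const_ps \<alpha> n + \<beta> * kernel \<omega> a n) =
            (\<lambda>n. const_ps (- \<beta> * of_real s * of_real k / of_real s) n
                 + (- (- \<beta> * of_real s) / of_real s) * kernel \<omega> a n)"
      using \<alpha> \<open>s > 0\<close> by simp
  next
    fix \<mu> :: complex assume "cmod \<mu> = 1"
    thus "H2w_is_inner \<omega> (\<lambda>n. const_ps (\<mu> * of_real k / of_real s) n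
                               + (- \<mu> / of_real s) * kernel \<omega> a n)"
      using \<open>s > 0\<close> by (subst inner_iff) (auto simp: norm_divide)
  qed
qed

end
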